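(* Let $n,a,t\in\mathbb N$ satisfy $t<a<n$. If $\mathcal F\subseteq\binom{[n]}{a}$ and $\mathcal G\subseteq\binom{[n]}{a}$ are such that $|F\cap G|\le t$ for all $F\in\mathcal F$ and $G\in\mathcal G$, then $$|\mathcal F|\cdot|\mathcal G|\le 32\,a(n-a)\cdot e^{-(a-t-1)^2/(20a)}\binom{n}{a}^2.$$
   Context: $[n]=\{1,\dots,n\}$ and $\binom{[n]}{a}$ denotes the family of all $a$-element subsets of $[n]$. *)

theory Defs
  imports Complex_Main
begin

end

theory Submission
  imports Defs
begin

(* Let Z be a random subset of {1..n} containing each point independently with probability
   p = a/n, q = 1 - p, and let h(Z) be the least number of points that must be added to Z before
   it contains a member of F.  Induction over the points, in the style of Talagrand, gives
     E[e^(s h)] * P(Z in F) <= ((p + q e^s) (p + q e^-s))^n <= e^(2 a s^2)      (0 <= s <= 1).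
   A member of G meets every member of F in at most t points, so h >= a - t on G, and the choice
   s = (a - t)/(4a) yields P(Z in F) P(Z in G) <= e^(-(a-t)^2/(8a)).  All a-sets have the same
   probability, which is at least 1/((n+1) C(n,a)) because a is the mode of Bin(n, a/n).  Hence
   |F| |G| <= (n+1)^2 e^(-(a-t)^2/(8a)) C(n,a)^2, and comparing with the trivial bound
   |F| |G| <= C(n,a)^2 gives the claim. *)

section \<open>The p-biased measure on subsets\<close>

definition biased_weight :: "'a set \<Rightarrow> real \<Rightarrow> 'a set \<Rightarrow> real" where
  "biased_weight I p Z = p ^ card Z * (1 - p) ^ card (I - Z)"

definition biased_measure :: "'a set \<Rightarrow> real \<Rightarrow> 'a set set \<Rightarrow> real" where
  "biased_measure I p F = sum (biased_weight I p) (Pow I \<inter> F)"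

definition biased_mgf :: "'a set \<Rightarrow> real \<Rightarrow> real \<Rightarrow> ('a set \<Rightarrow> nat) \<Rightarrow> real" where
  "biased_mgf I p s h = (\<Sum>Z\<in>Pow I. biased_weight I p Z * exp (s * real (h Z)))"

lemma sum_Pow_insert:
  assumes "finite I" "x \<notin> I"
  shows "(\<Sum>Z\<in>Pow (insert x I). f Z) = (\<Sum>Z\<in>Pow I. f Z) + (\<Sum>Z\<in>Pow I. f (insert x Z))"
proof -
  have "(\<Sum>Z\<in>Pow (insert x I). f Z) = (\<Sum>Z\<in>Pow I. f Z) + (\<Sum>Z\<in>insert x ` Pow I. f Z)"
    unfolding Pow_insert by (rule sum.union_disjoint) (use assms in auto)
  also have "(\<Sum>Z\<in>insert x ` Pow I. f Z) = (\<Sum>Z\<in>Pow I. f (insert x Z))"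
    by (subst sum.reindex) (use assms in \<open>auto intro!: inj_onI simp: o_def\<close>)
  finally show ?thesis .
qed

lemma biased_weight_nonneg: "0 \<le> p \<Longrightarrow> p \<le> 1 \<Longrightarrow> 0 \<le> biased_weight I p Z"
  by (simp add: biased_weight_def)

lemma biased_weight_insert:
  assumes "finite I" "x \<notin> I" "Z \<subseteq> I"
  shows "biased_weight (insert x I) p Z = (1 - p) * biased_weight I p Z"
    and "biased_weight (insert x I) p (insert x Z) = p * biased_weight I p Z"
proof -
  have "finite Z" "x \<notin> Z" using assms finite_subset by auto
  moreover have "insert x I - Z = insert x (I - Z)" "insert x I - insert x Z = I - Z"
    using assms by auto
  ultimately show "biased_weight (insert x I) p Z = (1 - p) * biased_weight I p Z"
    and "biased_weight (insert x I) p (insert x Z) = p * biased_weight I p Z"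
    using assms by (simp_all add: biased_weight_def)
qed

lemma biased_measure_empty [simp]: "biased_measure I p {} = 0"
  by (simp add: biased_measure_def)

lemma biased_measure_nonneg: "0 \<le> p \<Longrightarrow> p \<le> 1 \<Longrightarrow> 0 \<le> biased_measure I p F"
  unfolding biased_measure_def by (intro sum_nonneg biased_weight_nonneg)

lemma biased_measure_Pow_Int [simp]: "biased_measure I p (Pow I \<inter> F) = biased_measure I p F"
  by (simp add: biased_measure_def Int_absorb)

lemma biased_measure_insert:
  assumes "finite I" "x \<notin> I"
  shows "biased_measure (insert x I) p F
           = p * biased_measure I p {Z. insert x Z \<in> F} + (1 - p) * biased_measure I p F"
proof -
  have indicator_sum:
    "biased_measure J p H = (\<Sum>Z\<in>Pow J. if Z \<in> H then biased_weight J p Z else 0)"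
    if "finite J" for J :: "'a set" and H
  proof -
    have "Pow J \<inter> H = {Z \<in> Pow J. Z \<in> H}" by blast
    then show ?thesis
      unfolding biased_measure_def by (simp only:) (rule sum.inter_filter, simp add: that)
  qed
  have "biased_measure (insert x I) p F
      = (\<Sum>Z\<in>Pow I. if Z \<in> F then biased_weight (insert x I) p Z else 0)
        + (\<Sum>Z\<in>Pow I. if insert x Z \<in> F then biased_weight (insert x I) p (insert x Z) else 0)"
    using assms by (simp add: indicator_sum sum_Pow_insert)
  also have "\<dots> = (1 - p) * (\<Sum>Z\<in>Pow I. if Z \<in> F then biased_weight I p Z else 0)
        + p * (\<Sum>Z\<in>Pow I. if insert x Z \<in> F then biased_weight I p Z else 0)"
    unfolding sum_distrib_left
    by (intro arg_cong2[where f = "(+)"] sum.cong) (use assms biased_weight_insert in auto)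
  finally show ?thesis
    unfolding indicator_sum[OF assms(1)] mem_Collect_eq by (simp only: add.commute)
qed

lemma biased_mgf_nonneg: "0 \<le> p \<Longrightarrow> p \<le> 1 \<Longrightarrow> 0 \<le> biased_mgf I p s h"
  unfolding biased_mgf_def by (intro sum_nonneg mult_nonneg_nonneg biased_weight_nonneg) auto

lemma biased_mgf_insert:
  assumes "finite I" "x \<notin> I"
  shows "biased_mgf (insert x I) p s h
           = p * biased_mgf I p s (\<lambda>Z. h (insert x Z)) + (1 - p) * biased_mgf I p s h"
proof -
  have "biased_mgf (insert x I) p s h
      = (\<Sum>Z\<in>Pow I. biased_weight (insert x I) p Z * exp (s * real (h Z)))
        + (\<Sum>Z\<in>Pow I. biased_weight (insert x I) p (insert x Z) * exp (s * real (h (insert x Z))))"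
    unfolding biased_mgf_def using assms by (rule sum_Pow_insert)
  also have "\<dots> = (1 - p) * biased_mgf I p s h + p * biased_mgf I p s (\<lambda>Z. h (insert x Z))"
    unfolding biased_mgf_def sum_distrib_left
    by (intro arg_cong2[where f = "(+)"] sum.cong) (use assms biased_weight_insert in auto)
  finally show ?thesis by simp
qed

lemma biased_mgf_mono:
  assumes "0 \<le> p" "p \<le> 1" "0 \<le> s" and le: "\<And>Z. Z \<subseteq> I \<Longrightarrow> h Z \<le> h' Z + k"
  shows "biased_mgf I p s h \<le> exp (s * real k) * biased_mgf I p s h'"
  unfolding biased_mgf_def sum_distrib_left
proof (rule sum_mono)
  fix Z assume "Z \<in> Pow I"
  then have "s * real (h Z) \<le> s * real k + s * real (h' Z)"
    using le[of Z] \<open>0 \<le> s\<close> by (simp flip: distrib_left add: mult_left_mono)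
  then have exp_le: "exp (s * real (h Z)) \<le> exp (s * real k) * exp (s * real (h' Z))"
    by (simp flip: exp_add)
  show "biased_weight I p Z * exp (s * real (h Z))
      \<le> exp (s * real k) * (biased_weight I p Z * exp (s * real (h' Z)))"
    using mult_left_mono[OF exp_le biased_weight_nonneg[OF assms(1,2)]] by (simp add: mult.left_commute)
qed

lemma biased_measure_mult_exp_le_biased_mgf:
  assumes "finite I" "0 \<le> p" "p \<le> 1" "0 \<le> s"
    and ge: "\<And>Z. Z \<subseteq> I \<Longrightarrow> Z \<in> G \<Longrightarrow> d \<le> h Z"
  shows "biased_measure I p G * exp (s * real d) \<le> biased_mgf I p s h"
proof -
  have "biased_measure I p G * exp (s * real d)
      = (\<Sum>Z\<in>Pow I \<inter> G. biased_weight I p Z * exp (s * real d))"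
    by (simp add: biased_measure_def sum_distrib_right)
  also have "\<dots> \<le> (\<Sum>Z\<in>Pow I \<inter> G. biased_weight I p Z * exp (s * real (h Z)))"
    using ge assms(4) biased_weight_nonneg[OF assms(2,3)]
    by (intro sum_mono mult_left_mono) (auto intro: mult_left_mono)
  also have "\<dots> \<le> biased_mgf I p s h"
    unfolding biased_mgf_def
    by (rule sum_mono2) (use assms in \<open>auto simp: biased_weight_nonneg\<close>)
  finally show ?thesis .
qed

section \<open>Distance to a family of sets\<close>

definition cover_dist :: "'a set set \<Rightarrow> 'a set \<Rightarrow> nat" where
  "cover_dist F Z = Min ((\<lambda>X. card (X - Z)) ` F)"

lemma cover_dist_le: "finite F \<Longrightarrow> X \<in> F \<Longrightarrow> cover_dist F Z \<le> card (X - Z)"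
  unfolding cover_dist_def by (rule Min_le) auto

lemma cover_dist_attained:
  assumes "finite F" "F \<noteq> {}"
  obtains X where "X \<in> F" "cover_dist F Z = card (X - Z)"
proof -
  have "cover_dist F Z \<in> (\<lambda>X. card (X - Z)) ` F"
    unfolding cover_dist_def using assms by (intro Min_in) auto
  then show ?thesis using that by blast
qed

lemma cover_dist_geI:
  "finite F \<Longrightarrow> F \<noteq> {} \<Longrightarrow> (\<And>X. X \<in> F \<Longrightarrow> k \<le> card (X - Z))
    \<Longrightarrow> k \<le> cover_dist F Z"
  by (rule cover_dist_attained[of F Z]) auto

lemma cover_dist_le_cover_dist:
  assumes "finite F" "finite G" "G \<noteq> {}"
    and "\<And>Y. Y \<in> G \<Longrightarrow> \<exists>X\<in>F. card (X - Z) \<le> card (Y - Z') + k"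
  shows "cover_dist F Z \<le> cover_dist G Z' + k"
proof -
  obtain Y where "Y \<in> G" "cover_dist G Z' = card (Y - Z')"
    using cover_dist_attained[OF assms(2,3)] .
  moreover obtain X where "X \<in> F" "card (X - Z) \<le> card (Y - Z') + k"
    using assms(4) \<open>Y \<in> G\<close> by blast
  ultimately show ?thesis using cover_dist_le[OF assms(1)] by (metis le_trans)
qed

lemma cover_dist_le_subfamily:
  assumes "finite F" "G \<subseteq> F" "G \<noteq> {}" "\<forall>Y\<in>G. finite Y"
  shows "cover_dist F (insert x Z) \<le> cover_dist G Z" and "cover_dist F Z \<le> cover_dist G Z"
proof -
  have "finite G" using assms(1,2) by (rule finite_subset[rotated])
  have "\<exists>X\<in>F. card (X - insert x Z) \<le> card (Y - Z) + 0" if "Y \<in> G" for Y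
    using that assms(2,4) by (auto intro!: bexI[of _ Y] card_mono)
  from cover_dist_le_cover_dist[OF assms(1) \<open>finite G\<close> assms(3) this]
  show "cover_dist F (insert x Z) \<le> cover_dist G Z" by simp
  have "\<exists>X\<in>F. card (X - Z) \<le> card (Y - Z) + 0" if "Y \<in> G" for Y
    using that assms(2) by auto
  from cover_dist_le_cover_dist[OF assms(1) \<open>finite G\<close> assms(3) this]
  show "cover_dist F Z \<le> cover_dist G Z" by simp
qed

lemma cover_dist_le_image_insert:
  assumes "finite F" "finite G" "insert x ` G \<subseteq> F" "G \<noteq> {}" "\<forall>Y\<in>G. finite Y"
  shows "cover_dist F (insert x Z) \<le> cover_dist G Z" and "cover_dist F Z \<le> cover_dist G Z + 1"
proof -
  have "\<exists>X\<in>F. card (X - insert x Z) \<le> card (Y - Z) + 0" if "Y \<in> G" for Y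
    using that assms(3,5) by (auto intro!: bexI[of _ "insert x Y"] card_mono)
  from cover_dist_le_cover_dist[OF assms(1,2,4) this]
  show "cover_dist F (insert x Z) \<le> cover_dist G Z" by simp
  have "\<exists>X\<in>F. card (X - Z) \<le> card (Y - Z) + 1" if "Y \<in> G" for Y
  proof
    have "card (insert x Y - Z) \<le> card (insert x (Y - Z))"
      using that assms(5) by (intro card_mono) auto
    then show "card (insert x Y - Z) \<le> card (Y - Z) + 1"
      using that assms(5) by (simp add: card_insert_if split: if_splits)
    show "insert x Y \<in> F" using that assms(3) by blast
  qed
  from cover_dist_le_cover_dist[OF assms(1,2,4) this]
  show "cover_dist F Z \<le> cover_dist G Z + 1" .
qed

section \<open>The product-measure inequality\<close>

(* E[e^(s e)] E[e^(-s e)] for a Bernoulli variable e with P(e = 1) = 1 - p. *)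
definition bernoulli_mgf_prod :: "real \<Rightarrow> real \<Rightarrow> real" where
  "bernoulli_mgf_prod p s = (p + (1 - p) * exp s) * (p + (1 - p) * exp (- s))"

lemma bernoulli_mgf_prod_cosh:
  "bernoulli_mgf_prod p s = 1 + 2 * p * (1 - p) * (cosh s - 1)"
  unfolding bernoulli_mgf_prod_def cosh_field_def
  by (simp add: algebra_simps exp_minus field_simps power2_eq_square)

lemma one_le_bernoulli_mgf_prod: "0 \<le> p \<Longrightarrow> p \<le> 1 \<Longrightarrow> 1 \<le> bernoulli_mgf_prod p s"
  unfolding bernoulli_mgf_prod_cosh using cosh_real_ge_1[of s] by simp

lemma cosh_le_one_plus_square:
  fixes s :: real
  assumes "0 \<le> s" "s \<le> 1"
  shows "cosh s \<le> 1 + s^2"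
proof -
  have "exp s \<le> 1 + s + s^2" using assms by (rule exp_bound)
  moreover have "exp (- s) \<le> 1 - s + s^2"
  proof -
    have "exp (- s) \<le> 1 / (1 + s)"
      using exp_ge_add_one_self[of s] assms by (simp add: exp_minus field_simps)
    also have "\<dots> \<le> 1 - s + s^2"
      using assms by (simp add: field_simps power2_eq_square mult_left_le)
    finally show ?thesis .
  qed
  ultimately show ?thesis by (simp add: cosh_field_def)
qed

lemma bernoulli_mgf_prod_le_exp:
  assumes "0 \<le> p" "p \<le> 1" "0 \<le> s" "s \<le> 1"
  shows "bernoulli_mgf_prod p s \<le> exp (2 * p * s^2)"
proof -
  have "(1 - p) * (cosh s - 1) \<le> cosh s - 1"
    using assms cosh_real_ge_1[of s] by (simp add: mult_left_le_one_le)
  also have "\<dots> \<le> s^2"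
    using cosh_le_one_plus_square[OF assms(3,4)] by simp
  finally have "2 * p * ((1 - p) * (cosh s - 1)) \<le> 2 * p * s^2"
    using assms by (intro mult_left_mono) auto
  then have "bernoulli_mgf_prod p s \<le> 1 + 2 * p * s^2"
    unfolding bernoulli_mgf_prod_cosh by (simp add: mult.assoc)
  also have "\<dots> \<le> exp (2 * p * s^2)" by (rule exp_ge_add_one_self)
  finally show ?thesis .
qed

lemma bernoulli_mgf_prod_step_balanced:
  fixes p s u v Pv Pu C :: real
  assumes "0 \<le> p" "p \<le> 1" "0 < v" "v \<le> u" "exp (- s) * u \<le> v"
    and "0 \<le> Pv" "0 \<le> Pu" "Pu * u \<le> C" "Pv * v \<le> C"
  shows "(p * Pu + (1 - p) * Pv) * (p * u + (1 - p) * v) \<le> bernoulli_mgf_prod p s * C"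
proof -
  define q where "q = 1 - p"
  define r where "r = v / u"
  have "0 < u" "0 < r" "r \<le> 1" using assms by (auto simp: r_def)
  have "0 \<le> C" using assms mult_nonneg_nonneg[of Pv v] by linarith
  have "0 \<le> q" "0 \<le> p * q" using assms by (auto simp: q_def)
  have Puv: "Pu * v \<le> C * r" and Pvu: "Pv * u \<le> C / r"
    using assms \<open>0 < u\<close> by (auto simp: r_def field_simps)
  have "- s \<le> ln r" "ln r \<le> 0"
    using assms \<open>0 < u\<close> \<open>0 < r\<close> \<open>r \<le> 1\<close> by (auto simp: r_def ln_ge_iff field_simps)
  then have "cosh (ln r) \<le> cosh s"
    using cosh_real_nonpos_le_iff[of "ln r" "- s"] by simp
  moreover have "r + 1 / r = 2 * cosh (ln r)"
    unfolding cosh_ln_real[OF \<open>0 < r\<close>] by (simp add: inverse_eq_divide)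
  ultimately have r_inv: "r + 1 / r \<le> 2 * cosh s" by simp
  have "(p * Pu + q * Pv) * (p * u + q * v)
      = p^2 * (Pu * u) + q^2 * (Pv * v) + p * q * (Pu * v + Pv * u)"
    by (simp add: algebra_simps power2_eq_square)
  also have "\<dots> \<le> p^2 * C + q^2 * C + p * q * (C * r + C / r)"
    using assms Puv Pvu \<open>0 \<le> q\<close> \<open>0 \<le> p * q\<close>
    by (intro add_mono mult_left_mono) auto
  also have "\<dots> = C * (p^2 + q^2 + p * q * (r + 1 / r))"
    by (simp add: algebra_simps)
  also have "\<dots> \<le> C * (p^2 + q^2 + p * q * (2 * cosh s))"
    using r_inv \<open>0 \<le> C\<close> \<open>0 \<le> p * q\<close> by (intro mult_left_mono add_left_mono) auto
  also have "\<dots> = bernoulli_mgf_prod p s * C"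
    by (simp add: bernoulli_mgf_prod_cosh q_def algebra_simps power2_eq_square)
  finally show ?thesis by (simp add: q_def)
qed

(* The induction step: A and B are the contributions of the sets containing and avoiding the new
   point, u and v the measures of the two sections of the family, Pu and Pv their moment generating
   functions.  Each bound on A + B is the right one for one range of v / u. *)
lemma bernoulli_mgf_prod_step:
  fixes p s u v A B Pv Pu C :: real
  assumes "0 \<le> p" "p \<le> 1" "0 \<le> s" "0 \<le> u" "0 \<le> v" "0 \<le> Pv" "0 \<le> Pu"
    and A_u: "0 < u \<Longrightarrow> A \<le> p * Pu" and A_v: "0 < v \<Longrightarrow> A \<le> p * Pv"
    and B_u: "0 < u \<Longrightarrow> B \<le> (1 - p) * (exp s * Pu)"
    and B_v: "0 < v \<Longrightarrow> B \<le> (1 - p) * Pv"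
    and bound_u: "Pu * u \<le> C" and bound_v: "Pv * v \<le> C"
  shows "(A + B) * (p * u + (1 - p) * v) \<le> bernoulli_mgf_prod p s * C"
proof -
  define q where "q = 1 - p"
  have "0 \<le> q" "0 \<le> p * u + q * v" using assms by (simp_all add: q_def)
  have "0 \<le> C" using assms mult_nonneg_nonneg[of Pv v] by linarith
  have C_le: "C \<le> bernoulli_mgf_prod p s * C"
    using one_le_bernoulli_mgf_prod[OF assms(1,2)] \<open>0 \<le> C\<close> by (simp add: mult_le_cancel_right1)
  consider "v = 0" "u = 0" | "0 < v" "u \<le> v" | "0 < v" "v \<le> u" "exp (- s) * u \<le> v"
    | "0 < u" "v < exp (- s) * u"
    using assms by fastforce
  then show ?thesis
  proof cases
    case 1
    then show ?thesis using C_le \<open>0 \<le> C\<close> by simp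
  next
    case 2
    have "A + B \<le> Pv" using A_v B_v 2 by (simp add: algebra_simps)
    moreover have "p * u + q * v \<le> v" using 2 assms by (simp add: q_def algebra_simps mult_left_mono)
    ultimately have "(A + B) * (p * u + q * v) \<le> Pv * v"
      using \<open>0 \<le> Pv\<close> \<open>0 \<le> p * u + q * v\<close> by (intro mult_mono) auto
    then show ?thesis using bound_v C_le by (simp add: q_def)
  next
    case 3
    have "A + B \<le> p * Pu + q * Pv" using A_u B_v 3 by (simp add: q_def)
    then have "(A + B) * (p * u + q * v) \<le> (p * Pu + q * Pv) * (p * u + q * v)"
      using \<open>0 \<le> p * u + q * v\<close> by (rule mult_right_mono)
    also have "\<dots> \<le> bernoulli_mgf_prod p s * C"
      unfolding q_def using assms 3 by (intro bernoulli_mgf_prod_step_balanced) auto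
    finally show ?thesis by (simp add: q_def)
  next
    case 4
    have "A + B \<le> (p + q * exp s) * Pu" using A_u B_u 4 by (simp add: q_def algebra_simps)
    moreover have "p * u + q * v \<le> (p + q * exp (- s)) * u"
      using 4 \<open>0 \<le> q\<close> by (simp add: algebra_simps mult_left_mono)
    ultimately have "(A + B) * (p * u + q * v) \<le> (p + q * exp s) * Pu * ((p + q * exp (- s)) * u)"
      using \<open>0 \<le> Pu\<close> \<open>0 \<le> q\<close> \<open>0 \<le> p * u + q * v\<close> assms by (intro mult_mono) auto
    also have "\<dots> = bernoulli_mgf_prod p s * (Pu * u)"
      by (simp add: bernoulli_mgf_prod_def q_def algebra_simps)
    also have "\<dots> \<le> bernoulli_mgf_prod p s * C"
      using bound_u one_le_bernoulli_mgf_prod[OF assms(1,2), of s] by (simp add: mult_left_mono)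
    finally show ?thesis by (simp add: q_def)
  qed
qed

lemma biased_mgf_cover_dist_le_subfamily:
  assumes "0 \<le> p" "p \<le> 1" "0 \<le> s" "finite F" "G \<subseteq> F" "G \<noteq> {}" "\<forall>Y\<in>G. finite Y"
  shows "biased_mgf I p s (\<lambda>Z. cover_dist F (insert x Z)) \<le> biased_mgf I p s (cover_dist G)"
    and "biased_mgf I p s (cover_dist F) \<le> biased_mgf I p s (cover_dist G)"
  using biased_mgf_mono[OF assms(1-3), where I = I and h' = "cover_dist G" and k = 0]
    cover_dist_le_subfamily[OF assms(4-7)] by simp_all

lemma biased_mgf_cover_dist_le_image_insert:
  assumes "0 \<le> p" "p \<le> 1" "0 \<le> s"
    and "finite F" "finite G" "insert x ` G \<subseteq> F" "G \<noteq> {}" "\<forall>Y\<in>G. finite Y"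
  shows "biased_mgf I p s (\<lambda>Z. cover_dist F (insert x Z)) \<le> biased_mgf I p s (cover_dist G)"
    and "biased_mgf I p s (cover_dist F) \<le> exp s * biased_mgf I p s (cover_dist G)"
  using biased_mgf_mono[OF assms(1-3), where I = I and h = "\<lambda>Z. cover_dist F (insert x Z)" and k = 0]
    biased_mgf_mono[OF assms(1-3), where I = I and h = "cover_dist F" and k = 1]
    cover_dist_le_image_insert[OF assms(4-8)] by simp_all

(* No hypothesis F \<noteq> {} is needed: for F = {} the measure vanishes, whatever the junk value
   of cover_dist {} is. *)
lemma biased_mgf_cover_dist_mult_biased_measure_le:
  assumes "finite I" "F \<subseteq> Pow I" "0 \<le> p" "p \<le> 1" "0 \<le> s"
  shows "biased_mgf I p s (cover_dist F) * biased_measure I p F \<le> bernoulli_mgf_prod p s ^ card I"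
  using assms(1,2)
proof (induction I arbitrary: F rule: finite_induct)
  case empty
  then consider "F = {}" | "F = {{}}" by (metis Pow_empty subset_singletonD)
  then show ?case
    by cases (simp_all add: biased_mgf_def biased_measure_def biased_weight_def cover_dist_def)
next
  case (insert x I)
  define F0 where "F0 = Pow I \<inter> F"
  define F1 where "F1 = Pow I \<inter> {Z. insert x Z \<in> F}"
  have "finite F"
    using insert.prems insert.hyps(1) by (simp add: finite_subset)
  have sections: "finite F0" "finite F1" "F0 \<subseteq> F" "insert x ` F1 \<subseteq> F"
    "\<forall>Y\<in>F0. finite Y" "\<forall>Y\<in>F1. finite Y"
    using insert.hyps(1) by (auto simp: F0_def F1_def intro: finite_subset)
  let ?A = "biased_mgf I p s (\<lambda>Z. cover_dist F (insert x Z))"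
  let ?B = "biased_mgf I p s (cover_dist F)"
  let ?Pv = "biased_mgf I p s (cover_dist F0)" and ?Pu = "biased_mgf I p s (cover_dist F1)"
  let ?u = "biased_measure I p F1" and ?v = "biased_measure I p F0"
  have A_u: "?A \<le> ?Pu" and B_u: "?B \<le> exp s * ?Pu" if "0 < ?u"
  proof -
    from that have "F1 \<noteq> {}" by auto
    from biased_mgf_cover_dist_le_image_insert[OF assms(3-5) \<open>finite F\<close> sections(2,4) this sections(6)]
    show "?A \<le> ?Pu" "?B \<le> exp s * ?Pu" .
  qed
  have A_v: "?A \<le> ?Pv" and B_v: "?B \<le> ?Pv" if "0 < ?v"
  proof -
    from that have "F0 \<noteq> {}" by auto
    from biased_mgf_cover_dist_le_subfamily[OF assms(3-5) \<open>finite F\<close> sections(3) this sections(5)]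
    show "?A \<le> ?Pv" "?B \<le> ?Pv" .
  qed
  have "F1 \<subseteq> Pow I" "F0 \<subseteq> Pow I" by (auto simp: F0_def F1_def)
  then have "?Pu * ?u \<le> bernoulli_mgf_prod p s ^ card I" "?Pv * ?v \<le> bernoulli_mgf_prod p s ^ card I"
    by (auto intro: insert.IH)
  then have "(p * ?A + (1 - p) * ?B) * (p * ?u + (1 - p) * ?v)
      \<le> bernoulli_mgf_prod p s * bernoulli_mgf_prod p s ^ card I"
    using assms A_u A_v B_u B_v
    by (intro bernoulli_mgf_prod_step[where Pv = ?Pv and Pu = ?Pu])
      (simp_all add: biased_measure_nonneg biased_mgf_nonneg mult.commute mult_left_mono)
  moreover have "?u = biased_measure I p {Z. insert x Z \<in> F}" "?v = biased_measure I p F"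
    by (simp_all add: F0_def F1_def)
  ultimately show ?case
    using insert.hyps by (simp add: biased_mgf_insert biased_measure_insert)
qed

lemma biased_measure_mult_le_exp:
  fixes p s :: real
  assumes "finite I" "F \<subseteq> Pow I" "0 \<le> p" "p \<le> 1" "0 \<le> s" "s \<le> 1"
    and far: "\<And>Z. Z \<subseteq> I \<Longrightarrow> Z \<in> G \<Longrightarrow> d \<le> cover_dist F Z"
  shows "biased_measure I p F * biased_measure I p G \<le> exp (2 * p * s^2 * card I - s * d)"
proof -
  have "biased_measure I p F * (biased_measure I p G * exp (s * real d))
      \<le> biased_measure I p F * biased_mgf I p s (cover_dist F)"
    using assms by (intro mult_left_mono biased_measure_mult_exp_le_biased_mgf biased_measure_nonneg)
  also have "\<dots> \<le> bernoulli_mgf_prod p s ^ card I"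
    using biased_mgf_cover_dist_mult_biased_measure_le[of I F p s] assms by (simp add: mult.commute)
  also have "\<dots> \<le> exp (2 * p * s^2) ^ card I"
    using assms one_le_bernoulli_mgf_prod[of p s] by (intro power_mono bernoulli_mgf_prod_le_exp) auto
  also have "\<dots> = exp (2 * p * s^2 * card I)"
    by (simp add: exp_of_nat_mult[symmetric] mult.commute)
  finally show ?thesis
    by (simp add: exp_diff field_simps)
qed

section \<open>The mode of the binomial distribution\<close>

definition binomial_term :: "nat \<Rightarrow> real \<Rightarrow> nat \<Rightarrow> real" where
  "binomial_term n p k = real (n choose k) * p ^ k * (1 - p) ^ (n - k)"

lemma binomial_term_nonneg: "0 \<le> p \<Longrightarrow> p \<le> 1 \<Longrightarrow> 0 \<le> binomial_term n p k"
  by (simp add: binomial_term_def)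

lemma binomial_term_Suc:
  assumes "k < n"
  shows "binomial_term n p (Suc k) * (real (Suc k) * (1 - p)) = binomial_term n p k * (real (n - k) * p)"
proof -
  have choose: "real (Suc k) * real (n choose Suc k) = real (n - k) * real (n choose k)"
    using binomial_absorption[of k n] binomial_absorb_comp[of n k] by (metis of_nat_mult)
  have power: "(1 - p) ^ (n - Suc k) * (1 - p) = (1 - p) ^ (n - k)"
    using assms by (simp flip: power_Suc2 add: Suc_diff_Suc)
  have "binomial_term n p (Suc k) * (real (Suc k) * (1 - p))
      = (real (Suc k) * real (n choose Suc k)) * (p * p ^ k) * ((1 - p) ^ (n - Suc k) * (1 - p))"
    by (simp add: binomial_term_def mult_ac)
  also have "\<dots> = (real (n - k) * real (n choose k)) * (p * p ^ k) * (1 - p) ^ (n - k)"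
    unfolding choose power ..
  finally show ?thesis by (simp add: binomial_term_def mult_ac)
qed

lemma binomial_term_ratio_diff:
  "k \<le> n \<Longrightarrow> real (n - k) * p - real (Suc k) * (1 - p) = real (Suc n) * p - real (Suc k)"
  by (simp add: of_nat_diff algebra_simps)

lemma binomial_term_le_Suc:
  assumes "0 \<le> p" "p < 1" "k < n" "real (Suc k) \<le> real (Suc n) * p"
  shows "binomial_term n p k \<le> binomial_term n p (Suc k)"
proof -
  have "0 < real (Suc k) * (1 - p)" using assms by simp
  moreover have "real (Suc k) * (1 - p) \<le> real (n - k) * p"
    using binomial_term_ratio_diff[of k n p] assms by simp
  then have "binomial_term n p k * (real (Suc k) * (1 - p))
      \<le> binomial_term n p (Suc k) * (real (Suc k) * (1 - p))"
    unfolding binomial_term_Suc[OF assms(3)] using assms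
    by (intro mult_left_mono binomial_term_nonneg) auto
  ultimately show ?thesis by (simp add: mult_le_cancel_right)
qed

lemma binomial_term_Suc_le:
  assumes "0 \<le> p" "p < 1" "k < n" "real (Suc n) * p \<le> real (Suc k)"
  shows "binomial_term n p (Suc k) \<le> binomial_term n p k"
proof -
  have "0 < real (Suc k) * (1 - p)" using assms by simp
  moreover have "real (n - k) * p \<le> real (Suc k) * (1 - p)"
    using binomial_term_ratio_diff[of k n p] assms by simp
  then have "binomial_term n p (Suc k) * (real (Suc k) * (1 - p))
      \<le> binomial_term n p k * (real (Suc k) * (1 - p))"
    unfolding binomial_term_Suc[OF assms(3)] using assms
    by (intro mult_left_mono binomial_term_nonneg) auto
  ultimately show ?thesis by (simp add: mult_le_cancel_right)
qed

lemma binomial_term_le_mean: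
  assumes "0 < a" "a < n" "k \<le> n"
  shows "binomial_term n (a / n) k \<le> binomial_term n (a / n) a"
proof -
  have p: "0 \<le> real a / real n" "real a / real n < 1" using assms by simp_all
  have mean: "real a \<le> real (Suc n) * (real a / real n)" "real (Suc n) * (real a / real n) \<le> real a + 1"
    using assms by (simp_all add: field_simps)
  show ?thesis
  proof (cases "k \<le> a")
    case True
    then show ?thesis
    proof (induction k rule: inc_induct)
      case (step m)
      have "binomial_term n (a / n) m \<le> binomial_term n (a / n) (Suc m)"
        using step.hyps assms mean by (intro binomial_term_le_Suc p) auto
      then show ?case using step.IH by simp
    qed simp
  next
    case False
    then have "a \<le> k" by simp
    then show ?thesis using assms(3)
    proof (induction k rule: dec_induct)
      case (step m)
      have "binomial_term n (a / n) (Suc m) \<le> binomial_term n (a / n) m"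
        using step.hyps step.prems mean by (intro binomial_term_Suc_le p) auto
      then show ?case using step.IH step.prems by simp
    qed simp
  qed
qed

lemma binomial_term_mean_ge:
  assumes "0 < a" "a < n"
  shows "1 \<le> real (Suc n) * binomial_term n (a / n) a"
proof -
  have "1 = (real a / real n + (1 - real a / real n)) ^ n" by simp
  also have "\<dots> = (\<Sum>k\<le>n. binomial_term n (a / n) k)"
    unfolding binomial_ring binomial_term_def by (simp add: mult_ac)
  also have "\<dots> \<le> (\<Sum>k\<le>n. binomial_term n (a / n) a)"
    using assms by (intro sum_mono binomial_term_le_mean) auto
  also have "\<dots> = real (Suc n) * binomial_term n (a / n) a" by simp
  finally show ?thesis .
qed

section \<open>Cross-intersecting families\<close>

lemma biased_measure_of_uniform:
  assumes "finite I" "F \<subseteq> {X. X \<subseteq> I \<and> card X = a}"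
  shows "biased_measure I p F = real (card F) * (p ^ a * (1 - p) ^ (card I - a))"
proof -
  have "biased_weight I p X = p ^ a * (1 - p) ^ (card I - a)" if "X \<in> F" for X
    using that assms by (auto simp: biased_weight_def card_Diff_subset finite_subset)
  moreover have "Pow I \<inter> F = F" using assms(2) by auto
  ultimately show ?thesis by (simp add: biased_measure_def)
qed

lemma card_mult_card_le_binomial_square:
  assumes "finite I"
    and "F \<subseteq> {A. A \<subseteq> I \<and> card A = a}" and "G \<subseteq> {A. A \<subseteq> I \<and> card A = a}"
  shows "real (card F) * real (card G) \<le> real (card I choose a) ^ 2"
proof -
  have fin: "finite {A. A \<subseteq> I \<and> card A = a}"
    by (rule finite_subset[of _ "Pow I"]) (use assms(1) in auto)
  have "card F \<le> card I choose a" "card G \<le> card I choose a"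
    using card_mono[OF fin assms(2)] card_mono[OF fin assms(3)] n_subsets[OF assms(1)] by simp_all
  then show ?thesis
    using mult_mono[of "real (card F)" "real (card I choose a)" "real (card G)" "real (card I choose a)"]
    by (simp add: power2_eq_square)
qed

lemma cross_intersecting_biased_measure_le:
  assumes "finite I" "t < a" "a \<le> card I"
    and F: "F \<subseteq> {A. A \<subseteq> I \<and> card A = a}"
    and G: "G \<subseteq> {A. A \<subseteq> I \<and> card A = a}"
    and FG: "\<forall>X\<in>F. \<forall>Y\<in>G. card (X \<inter> Y) \<le> t"
  defines "p \<equiv> real a / real (card I)"
  shows "biased_measure I p F * biased_measure I p G \<le> exp (- ((real a - real t)^2 / (8 * real a)))"
proof (cases "F = {}")
  case False
  define s where "s = (real a - real t) / (4 * real a)"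
  have "0 \<le> p" "p \<le> 1" "0 \<le> s" "s \<le> 1"
    using assms by (simp_all add: p_def s_def)
  have "finite F" by (rule finite_subset[of F "Pow I"]) (use F assms(1) in auto)
  have far: "a - t \<le> cover_dist F Z" if "Z \<in> G" for Z
  proof (rule cover_dist_geI[OF \<open>finite F\<close> False])
    fix X assume "X \<in> F"
    then have "finite X" "card X = a" "card (X \<inter> Z) \<le> t"
      using F FG that finite_subset[OF _ assms(1)] by auto
    then show "a - t \<le> card (X - Z)" by (simp add: card_Diff_subset_Int)
  qed
  have "biased_measure I p F * biased_measure I p G
      \<le> exp (2 * p * s^2 * card I - s * real (a - t))"
    using assms(1) F \<open>0 \<le> p\<close> \<open>p \<le> 1\<close> \<open>0 \<le> s\<close> \<open>s \<le> 1\<close> far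
    by (intro biased_measure_mult_le_exp) auto
  also have "2 * p * s^2 * card I - s * real (a - t) = - ((real a - real t)^2 / (8 * real a))"
    using assms(2,3) by (simp add: p_def s_def of_nat_diff field_simps power2_eq_square)
  finally show ?thesis .
qed simp

lemma cross_intersecting_card_mult_le:
  assumes "finite I" "t < a" "a < card I"
    and F: "F \<subseteq> {A. A \<subseteq> I \<and> card A = a}"
    and G: "G \<subseteq> {A. A \<subseteq> I \<and> card A = a}"
    and FG: "\<forall>X\<in>F. \<forall>Y\<in>G. card (X \<inter> Y) \<le> t"
  shows "real (card F) * real (card G)
           \<le> (real (card I) + 1)^2 * exp (- ((real a - real t)^2 / (8 * real a)))
              * real (card I choose a)^2"
proof -
  define p where "p = real a / real (card I)"
  define w where "w = p ^ a * (1 - p) ^ (card I - a)"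
  have measures: "real (card F) * real (card G) * w^2 \<le> exp (- ((real a - real t)^2 / (8 * real a)))"
    using cross_intersecting_biased_measure_le[OF assms(1,2) _ F G FG]
      biased_measure_of_uniform[OF assms(1) F, of p] biased_measure_of_uniform[OF assms(1) G, of p]
      assms(3)
    by (simp add: p_def w_def power2_eq_square mult_ac)
  have "1 \<le> ((real (card I) + 1) * real (card I choose a) * w)^2"
    using binomial_term_mean_ge[of a "card I"] assms(2,3)
    by (simp add: one_le_power binomial_term_def w_def p_def mult_ac add.commute)
  then have "real (card F) * real (card G)
      \<le> real (card F) * real (card G) * ((real (card I) + 1) * real (card I choose a) * w)^2"
    using mult_left_mono[of 1, of _ "real (card F) * real (card G)"] by simp
  also have "\<dots> = (real (card I) + 1)^2 * real (card I choose a)^2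
      * (real (card F) * real (card G) * w^2)"
    by (simp add: power_mult_distrib mult_ac)
  also have "\<dots> \<le> (real (card I) + 1)^2 * real (card I choose a)^2
      * exp (- ((real a - real t)^2 / (8 * real a)))"
    using measures by (intro mult_left_mono) auto
  finally show ?thesis by (simp add: mult_ac)
qed

lemma le_mult_of_le_square_mult:
  fixes x y b :: real
  assumes "0 \<le> y" "0 \<le> b" "x \<le> b" "x \<le> y^2 * b"
  shows "x \<le> y * b"
proof (cases "y \<le> 1")
  case True
  then have "y^2 \<le> y" using assms(1) by (simp add: power2_eq_square mult_left_le_one_le)
  then show ?thesis using assms mult_right_mono[of "y^2" y b] by linarith
next
  case False
  then show ?thesis using assms mult_right_mono[of 1 y b] by linarith
qed

theorem theorem4:
  fixes n a t :: nat
    and F G :: "nat set set"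
  assumes "t < a" and "a < n"
    and "F \<subseteq> {A. A \<subseteq> {1..n} \<and> card A = a}"
    and "G \<subseteq> {A. A \<subseteq> {1..n} \<and> card A = a}"
    and "\<forall>X\<in>F. \<forall>Y\<in>G. card (X \<inter> Y) \<le> t"
  shows "real (card F) * real (card G)
           \<le> 32 * real a * real (n - a) * exp (- ((real a - real t - 1)^2) / (20 * real a))
              * (real (n choose a))^2"
proof (rule le_mult_of_le_square_mult)
  show "real (card F) * real (card G) \<le> (real (n choose a))^2"
    using card_mult_card_le_binomial_square[of "{1..n}" F a G] assms(3,4) by simp
  have main: "real (card F) * real (card G)
      \<le> (real n + 1)^2 * exp (- ((real a - real t)^2 / (8 * real a))) * (real (n choose a))^2"
    using cross_intersecting_card_mult_le[of "{1..n}" t a F G] assms by simp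
  have "0 \<le> (real a - 1) * (real n - real a - 1)"
    using assms(1,2) by simp
  then have size: "real n + 1 \<le> 32 * real a * real (n - a)"
    using assms(1,2) by (simp add: of_nat_diff algebra_simps)
  have "(real a - real t - 1)^2 / (10 * real a) \<le> (real a - real t)^2 / (8 * real a)"
    using assms(1) by (intro frac_le power_mono) auto
  then have decay: "exp (- ((real a - real t)^2 / (8 * real a)))
      \<le> exp (- ((real a - real t - 1)^2) / (20 * real a))^2"
    by (simp flip: exp_of_nat_mult)
  have "(real n + 1)^2 * exp (- ((real a - real t)^2 / (8 * real a)))
      \<le> (32 * real a * real (n - a))^2 * exp (- ((real a - real t - 1)^2) / (20 * real a))^2"
    by (rule mult_mono[OF power_mono[OF size] decay]) simp_all
  from order_trans[OF main mult_right_mono[OF this]]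
  show "real (card F) * real (card G)
      \<le> (32 * real a * real (n - a) * exp (- ((real a - real t - 1)^2) / (20 * real a)))^2
         * (real (n choose a))^2"
    by (simp add: power_mult_distrib)
qed simp_all

end
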